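(* If $L$ is a regular language, then ${\rm bdr}(L)$ is context-free.
   Context: For a word $w=a_1a_2\cdots a_n$, ${\rm odd}(w)=a_1a_3a_5\cdots$ (letters at odd positions) and ${\rm even}(w)=a_2a_4\cdots$ (letters at even positions). $x^R$ denotes the reversal of $x$. ${\rm bdr}(w)={\rm odd}(w)\,{\rm even}(w)^R$, and ${\rm bdr}(L)=\{{\rm bdr}(w):w\in L\}$. *)

theory Defs
  imports Main
begin

text \<open>Positions are counted from 1: odds w = a1 a3 a5 ..., evens w = a2 a4 ...\<close>

fun odds :: "'a list \<Rightarrow> 'a list" where
  "odds [] = []"
| "odds [x] = [x]"
| "odds (x # y # xs) = x # odds xs"

fun evens :: "'a list \<Rightarrow> 'a list" where
  "evens [] = []"
| "evens [x] = []"
| "evens (x # y # xs) = y # evens xs"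

definition bdr :: "'a list \<Rightarrow> 'a list" where
  "bdr w = odds w @ rev (evens w)"

definition bdr_lang :: "'a list set \<Rightarrow> 'a list set" where
  "bdr_lang L = bdr ` L"

datatype 'a rexp = Zero | One | Atom 'a | Plus "'a rexp" "'a rexp"
  | Times "'a rexp" "'a rexp" | Star "'a rexp"

definition conc :: "'a list set \<Rightarrow> 'a list set \<Rightarrow> 'a list set" where
  "conc A B = {u @ v | u v. u \<in> A \<and> v \<in> B}"

inductive_set star :: "'a list set \<Rightarrow> 'a list set" for A where
  star_Nil: "[] \<in> star A"
| star_app: "u \<in> A \<Longrightarrow> v \<in> star A \<Longrightarrow> u @ v \<in> star A"

fun lang :: "'a rexp \<Rightarrow> 'a list set" where
  "lang Zero = {}"
| "lang One = {[]}"
| "lang (Atom a) = {[a]}"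
| "lang (Plus r s) = lang r \<union> lang s"
| "lang (Times r s) = conc (lang r) (lang s)"
| "lang (Star r) = star (lang r)"

definition regular :: "'a list set \<Rightarrow> bool" where
  "regular L \<longleftrightarrow> (\<exists>r. lang r = L)"

text \<open>A grammar: finite set of productions over nonterminals (nat) and terminals 'a.
  Symbols are Inl nonterminal / Inr terminal.\<close>

type_synonym 'a cfg_prods = "(nat \<times> (nat + 'a) list) set"

inductive cfg_step :: "'a cfg_prods \<Rightarrow> (nat + 'a) list \<Rightarrow> (nat + 'a) list \<Rightarrow> bool"
  for P where
  "(A, rhs) \<in> P \<Longrightarrow> cfg_step P (u @ [Inl A] @ v) (u @ rhs @ v)"

definition cfg_lang :: "'a cfg_prods \<Rightarrow> nat \<Rightarrow> 'a list set" where
  "cfg_lang P S = {w. (cfg_step P)\<^sup>*\<^sup>* [Inl S] (map Inr w)}"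

definition context_free :: "'a list set \<Rightarrow> bool" where
  "context_free L \<longleftrightarrow> (\<exists>P S. finite P \<and> cfg_lang P S = L)"

end

theory Submission
  imports Defs "HOL-Library.Countable"
begin

(* A regular language is accepted by a finite epsilon-NFA (Thompson's
   construction from a regular expression).  From such an automaton we build a
   context-free grammar with two nonterminals per state q:
     nt_bdr q   generates bdr w       for every word w leading from q to the final state,
     nt_dual q  generates bdr_dual w  for the same words,
   where bdr_dual w = evens w @ rev (odds w).  The two word maps satisfy
     bdr (a # w) = a # bdr_dual w      and      bdr_dual (a # w) = bdr w @ [a],
   so an a-transition p -> p' yields the productions nt_bdr p -> a nt_dual p' and
   nt_dual p -> nt_bdr p' a, an epsilon-transition yields nt_bdr p -> nt_bdr p' and
   nt_dual p -> nt_dual p', and the final state gets two empty productions. *)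

lemma conc_assoc: "conc (conc A B) C = conc A (conc B C)"
  unfolding conc_def by (auto, metis append_assoc, metis append_assoc)

lemma conc_Nil_right [simp]: "conc A {[]} = A"
  unfolding conc_def by auto

lemma conc_Nil_left [simp]: "conc {[]} A = A"
  unfolding conc_def by auto

lemma conc_single_left [simp]: "conc {[a]} A = (Cons a) ` A"
  unfolding conc_def by auto

lemma conc_single_right [simp]: "conc A {[a]} = (\<lambda>x. x @ [a]) ` A"
  unfolding conc_def by auto

lemma conc_mono: "A \<subseteq> A' \<Longrightarrow> B \<subseteq> B' \<Longrightarrow> conc A B \<subseteq> conc A' B'"
  unfolding conc_def by blast

definition bdr_dual :: "'a list \<Rightarrow> 'a list" where
  "bdr_dual w = evens w @ rev (odds w)"

text \<open>Prepending a letter swaps the roles of odd and even positions.\<close>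

lemma odds_evens_Cons: "odds (a # w) = a # evens w \<and> evens (a # w) = odds w"
  by (induction w arbitrary: a rule: odds.induct) auto

lemma bdr_Cons: "bdr (a # w) = a # bdr_dual w"
  by (simp add: bdr_def bdr_dual_def odds_evens_Cons)

lemma bdr_dual_Cons: "bdr_dual (a # w) = bdr w @ [a]"
  by (simp add: bdr_def bdr_dual_def odds_evens_Cons)

lemma bdr_Nil [simp]: "bdr [] = []" and bdr_dual_Nil [simp]: "bdr_dual [] = []"
  by (simp_all add: bdr_def bdr_dual_def)

inductive path :: "('s \<times> 'a option \<times> 's) set \<Rightarrow> 's \<Rightarrow> 'a list \<Rightarrow> 's \<Rightarrow> bool"
  for T where
  path_Nil: "path T p [] p"
| path_letter: "(p, Some a, p') \<in> T \<Longrightarrow> path T p' w q \<Longrightarrow> path T p (a # w) q"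
| path_eps: "(p, None, p') \<in> T \<Longrightarrow> path T p' w q \<Longrightarrow> path T p w q"

lemma path_trans: "path T p u q \<Longrightarrow> path T q v r \<Longrightarrow> path T p (u @ v) r"
  by (induction rule: path.induct) (auto intro: path.intros)

lemma path_mono: "path T p w q \<Longrightarrow> T \<subseteq> T' \<Longrightarrow> path T' p w q"
  by (induction rule: path.induct) (auto intro: path.intros)

lemma path_empty: "path {} p w q \<Longrightarrow> p = q \<and> w = []"
  by (induction rule: path.induct) auto

text \<open>This is how all
  "only these words are accepted" directions are proved.\<close>

lemma path_invariant:
  assumes "path T p w q" "[] \<in> Lg q"
    and "\<And>s s'. (s, None, s') \<in> T \<Longrightarrow> Lg s' \<subseteq> Lg s"
    and "\<And>s a s' w'. (s, Some a, s') \<in> T \<Longrightarrow> w' \<in> Lg s' \<Longrightarrow> a # w' \<in> Lg s"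
  shows "w \<in> Lg p"
  using assms(1,2) by induction (use assms in auto)

text \<open>Reading a transition of the component backwards
  preserves this language, which discharges the component cases of
  path_invariant.\<close>

definition cont_lang :: "('s \<times> 'a option \<times> 's) set \<Rightarrow> 's \<Rightarrow> 's \<Rightarrow> 'a list set \<Rightarrow> 'a list set"
  where "cont_lang T q f C = conc {w. path T q w f} C"

lemma cont_lang_eps: "(p, None, q) \<in> T \<Longrightarrow> cont_lang T q f C \<subseteq> cont_lang T p f C"
  unfolding cont_lang_def conc_def by (auto intro: path_eps)

lemma cont_lang_letter:
  "(p, Some a, q) \<in> T \<Longrightarrow> w \<in> cont_lang T q f C \<Longrightarrow> a # w \<in> cont_lang T p f C"
  unfolding cont_lang_def conc_def by simp (metis append_Cons path_letter)

lemma cont_lang_final: "C \<subseteq> cont_lang T f f C"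
  unfolding cont_lang_def conc_def by (auto intro: path_Nil)

lemma cont_lang_Nil [simp]: "cont_lang T q f {[]} = {w. path T q w f}"
  by (simp add: cont_lang_def)

section \<open>Thompson's construction\<close>

text \<open>States are lists of numbers; the copies of two sub-automata are kept apart by
  prefixing their states with a tag k.\<close>

type_synonym 'a enfa = "(nat list \<times> 'a option \<times> nat list) set \<times> nat list \<times> nat list"

fun enfa_lang :: "'a enfa \<Rightarrow> 'a list set" where
  "enfa_lang (T, i, f) = {w. path T i w f}"

definition tag :: "nat \<Rightarrow> (nat list \<times> 'a option \<times> nat list) set \<Rightarrow> (nat list \<times> 'a option \<times> nat list) set"
  where "tag k T = (\<lambda>(p, x, q). (k # p, x, k # q)) ` T"

lemma tag_mem [simp]: "(k # p, x, k # q) \<in> tag k T \<longleftrightarrow> (p, x, q) \<in> T"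
  unfolding tag_def by force

lemma tagE:
  assumes "(p, x, q) \<in> tag k T"
  obtains p' q' where "p = k # p'" "q = k # q'" "(p', x, q') \<in> T"
  using assms unfolding tag_def by auto

lemma finite_tag [simp]: "finite T \<Longrightarrow> finite (tag k T)"
  unfolding tag_def by simp

lemma path_tag: "path T p w q \<Longrightarrow> path (tag k T) (k # p) w (k # q)"
  by (induction rule: path.induct) (metis path.intros tag_mem)+

lemma path_embed: "path T p w q \<Longrightarrow> tag k T \<subseteq> T' \<Longrightarrow> path T' (k # p) w (k # q)"
  by (rule path_mono[OF path_tag])

lemma tag_invariant:
  assumes "\<And>q. Lg (k # q) = cont_lang T q f C"
  shows "(x, None, y) \<in> tag k T \<Longrightarrow> Lg y \<subseteq> Lg x"
    and "(x, Some a, y) \<in> tag k T \<Longrightarrow> w \<in> Lg y \<Longrightarrow> a # w \<in> Lg x"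
  by (auto elim!: tagE simp only: assms intro: cont_lang_eps[THEN subsetD] cont_lang_letter)

text \<open>Each language equation is proved by path_invariant for one
  inclusion (with Lg assigning cont_lang to the states of each copy) and by embedding
  the component paths for the other.\<close>

fun enfa_plus :: "'a enfa \<Rightarrow> 'a enfa \<Rightarrow> 'a enfa" where
  "enfa_plus (T1, i1, f1) (T2, i2, f2) =
     (tag 0 T1 \<union> tag 1 T2 \<union>
      {([], None, 0 # i1), ([], None, 1 # i2), (0 # f1, None, [2]), (1 # f2, None, [2])}, [], [2])"

fun enfa_times :: "'a enfa \<Rightarrow> 'a enfa \<Rightarrow> 'a enfa" where
  "enfa_times (T1, i1, f1) (T2, i2, f2) =
     (tag 0 T1 \<union> tag 1 T2 \<union> {(0 # f1, None, 1 # i2)}, 0 # i1, 1 # f2)"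

fun enfa_star :: "'a enfa \<Rightarrow> 'a enfa" where
  "enfa_star (T1, i1, f1) = (tag 0 T1 \<union> {([], None, 0 # i1), (0 # f1, None, [])}, [], [])"

lemma enfa_lang_plus: "enfa_lang (enfa_plus M1 M2) = enfa_lang M1 \<union> enfa_lang M2"
proof -
  obtain T1 i1 f1 T2 i2 f2 where M: "M1 = (T1, i1, f1)" "M2 = (T2, i2, f2)"
    by (cases M1, cases M2) auto
  define T where "T = tag 0 T1 \<union> tag 1 T2 \<union>
    {([], None, 0 # i1), ([], None, 1 # i2), (0 # f1, None, [2]), (1 # f2, None, [2::nat])}"
  define Lg where "Lg x = (case x of [] \<Rightarrow> {w. path T1 i1 w f1} \<union> {w. path T2 i2 w f2}
    | k # q \<Rightarrow> if k = 0 then cont_lang T1 q f1 {[]} else if k = 1 then cont_lang T2 q f2 {[]}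
               else {[]})" for x
  have Lg0: "Lg (0 # q) = cont_lang T1 q f1 {[]}"
    and Lg1: "Lg (1 # q) = cont_lang T2 q f2 {[]}" for q
    by (simp_all add: Lg_def)
  have "w \<in> Lg []" if "path T [] w [2]" for w
  proof (rule path_invariant[OF that])
    fix x y assume "(x, None, y) \<in> T"
    then show "Lg y \<subseteq> Lg x"
      unfolding T_def
      by (elim UnE insertE)
        (blast dest: tag_invariant(1)[OF Lg0] tag_invariant(1)[OF Lg1] | auto simp: Lg_def path_Nil)+
  next
    fix x a y w' assume "(x, Some a, y) \<in> T" "w' \<in> Lg y"
    then show "a # w' \<in> Lg x"
      unfolding T_def by (blast dest: tag_invariant(2)[OF Lg0] tag_invariant(2)[OF Lg1])
  qed (simp add: Lg_def)
  moreover have "path T [] w [2]" if "path T1 i1 w f1 \<or> path T2 i2 w f2" for w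
  proof -
    have exit0: "path T (0 # f1) [] [2]" and exit1: "path T (1 # f2) [] [2]"
      by (auto simp: T_def intro!: path_eps[OF _ path_Nil])
    have "tag 0 T1 \<subseteq> T" "tag 1 T2 \<subseteq> T" by (auto simp: T_def)
    then have "path T (0 # i1) w [2] \<or> path T (1 # i2) w [2]"
      using that path_trans[OF path_embed exit0] path_trans[OF path_embed exit1] by fastforce
    then show ?thesis by (auto intro: path_eps simp: T_def)
  qed
  moreover have "enfa_plus M1 M2 = (T, [], [2])" by (simp add: M T_def)
  ultimately show ?thesis by (auto simp: M Lg_def)
qed

lemma enfa_lang_times: "enfa_lang (enfa_times M1 M2) = conc (enfa_lang M1) (enfa_lang M2)"
proof -
  obtain T1 i1 f1 T2 i2 f2 where M: "M1 = (T1, i1, f1)" "M2 = (T2, i2, f2)"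
    by (cases M1, cases M2) auto
  define T where "T = tag 0 T1 \<union> tag 1 T2 \<union> {(0 # f1, None, 1 # i2)}"
  define B where "B = {w. path T2 i2 w f2}"
  define Lg where "Lg x = (case x of [] \<Rightarrow> {}
    | k # q \<Rightarrow> if k = 0 then cont_lang T1 q f1 B else cont_lang T2 q f2 {[]})" for x
  have Lg0: "Lg (0 # q) = cont_lang T1 q f1 B"
    and Lg1: "Lg (1 # q) = cont_lang T2 q f2 {[]}" for q
    by (simp_all add: Lg_def)
  have "w \<in> Lg (0 # i1)" if "path T (0 # i1) w (1 # f2)" for w
  proof (rule path_invariant[OF that])
    have glue: "Lg (1 # i2) \<subseteq> Lg (0 # f1)"
      unfolding Lg0 Lg1 by (simp add: B_def[symmetric] cont_lang_final)
    fix x y assume "(x, None, y) \<in> T"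
    then show "Lg y \<subseteq> Lg x"
      unfolding T_def
      by (elim UnE insertE) (blast dest: tag_invariant(1)[OF Lg0] tag_invariant(1)[OF Lg1] | use glue in auto)+
  next
    fix x a y w' assume "(x, Some a, y) \<in> T" "w' \<in> Lg y"
    then show "a # w' \<in> Lg x"
      unfolding T_def by (blast dest: tag_invariant(2)[OF Lg0] tag_invariant(2)[OF Lg1])
  qed (simp add: Lg_def path_Nil)
  moreover have "path T (0 # i1) (u @ v) (1 # f2)" if "path T1 i1 u f1" "path T2 i2 v f2" for u v
  proof -
    have "tag 0 T1 \<subseteq> T" "tag 1 T2 \<subseteq> T" by (auto simp: T_def)
    then have "path T (0 # i1) u (0 # f1)" "path T (1 # i2) v (1 # f2)"
      using that by (auto intro: path_embed)
    then show ?thesis by (auto intro: path_trans path_eps simp: T_def)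
  qed
  moreover have "enfa_times M1 M2 = (T, 0 # i1, 1 # f2)" by (simp add: M T_def)
  ultimately show ?thesis by (auto simp: M Lg0 B_def cont_lang_def conc_def)
qed

lemma enfa_lang_star: "enfa_lang (enfa_star M) = star (enfa_lang M)"
proof -
  obtain T1 i1 f1 where M: "M = (T1, i1, f1)" by (cases M) auto
  define T where "T = tag 0 T1 \<union> {([], None, 0 # i1), (0 # f1, None, [])}"
  define A where "A = {w. path T1 i1 w f1}"
  define Lg where "Lg x = (case x of [] \<Rightarrow> star A | _ # q \<Rightarrow> cont_lang T1 q f1 (star A))" for x
  have Lg0: "Lg (0 # q) = cont_lang T1 q f1 (star A)" for q
    by (simp add: Lg_def)
  have "w \<in> Lg []" if "path T [] w []" for w
  proof (rule path_invariant[OF that])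
    fix x y assume "(x, None, y) \<in> T"
    moreover have "cont_lang T1 i1 f1 (star A) \<subseteq> star A"
      unfolding cont_lang_def conc_def A_def by (auto intro: star.intros)
    ultimately show "Lg y \<subseteq> Lg x"
      unfolding T_def
      by (elim UnE insertE) (blast dest: tag_invariant(1)[OF Lg0] | simp add: Lg_def cont_lang_final)+
  next
    fix x a y w' assume "(x, Some a, y) \<in> T" "w' \<in> Lg y"
    then show "a # w' \<in> Lg x"
      unfolding T_def by (blast dest: tag_invariant(2)[OF Lg0])
  qed (simp add: Lg_def star.intros)
  moreover have "path T [] w []" if "w \<in> star A" for w
    using that
  proof induction
    case star_Nil then show ?case by (rule path_Nil)
  next
    case (star_app u v)
    have "tag 0 T1 \<subseteq> T" by (auto simp: T_def)
    then have "path T (0 # i1) u (0 # f1)" using star_app.hyps(1) by (auto simp: A_def intro: path_embed)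
    moreover have "path T (0 # f1) v []" using star_app.IH by (rule path_eps[rotated]) (simp add: T_def)
    ultimately show ?case by (auto intro: path_trans path_eps[rotated] simp: T_def)
  qed
  moreover have "enfa_star M = (T, [], [])" by (simp add: M T_def)
  ultimately show ?thesis by (auto simp: M Lg_def A_def)
qed

lemma path_single_letter: "path {([], Some a, [0::nat])} [] w [0] \<longleftrightarrow> w = [a]"
proof
  assume p: "path {([], Some a, [0::nat])} [] w [0]"
  define Lg where "Lg s = (if s = [] then {[a]} else {[]})" for s :: "nat list"
  have "w \<in> Lg []"
    by (rule path_invariant[OF p]) (auto simp: Lg_def)
  then show "w = [a]" by (simp add: Lg_def)
qed (auto intro: path.intros)

fun thompson :: "'a rexp \<Rightarrow> 'a enfa" where
  "thompson Zero = ({}, [], [0])"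
| "thompson One = ({}, [], [])"
| "thompson (Atom a) = ({([], Some a, [0])}, [], [0])"
| "thompson (Plus r s) = enfa_plus (thompson r) (thompson s)"
| "thompson (Times r s) = enfa_times (thompson r) (thompson s)"
| "thompson (Star r) = enfa_star (thompson r)"

lemma enfa_lang_thompson: "enfa_lang (thompson r) = lang r"
  by (induction r)
    (auto simp: enfa_lang_plus enfa_lang_times enfa_lang_star path_single_letter
      dest: path_empty intro: path_Nil)

lemma finite_thompson: "finite (fst (thompson r))"
proof (induction r)
  case (Plus r s) then show ?case by (cases "thompson r", cases "thompson s") simp
next
  case (Times r s) then show ?case by (cases "thompson r", cases "thompson s") simp
next
  case (Star r) then show ?case by (cases "thompson r") simp
qed simp_all

lemma regular_enfa:
  assumes "regular L"
  obtains T :: "(nat list \<times> 'a option \<times> nat list) set" and i f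
  where "finite T" "L = {w. path T i w f}"
proof -
  obtain r where "lang r = L" using assms unfolding regular_def by blast
  with enfa_lang_thompson[of r] finite_thompson[of r] show ?thesis
    by (cases "thompson r") (auto intro: that)
qed

fun sem :: "(nat \<Rightarrow> 'a list set) \<Rightarrow> (nat + 'a) list \<Rightarrow> 'a list set" where
  "sem Lg [] = {[]}"
| "sem Lg (Inl A # s) = conc (Lg A) (sem Lg s)"
| "sem Lg (Inr a # s) = conc {[a]} (sem Lg s)"

lemma sem_append: "sem Lg (u @ v) = conc (sem Lg u) (sem Lg v)"
proof (induction u)
  case (Cons x u)
  then show ?case by (cases x) (simp_all add: conc_assoc[symmetric] del: conc_single_left)
qed simp

lemma sem_map_Inr [simp]: "sem Lg (map Inr w) = {w}"
  by (induction w) auto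

lemma derivation_sound:
  assumes "(cfg_step P)\<^sup>*\<^sup>* s t" and "\<And>A rhs. (A, rhs) \<in> P \<Longrightarrow> sem Lg rhs \<subseteq> Lg A"
  shows "sem Lg t \<subseteq> sem Lg s"
  using assms(1)
proof induction
  case (step t t')
  from step.hyps(2) have "sem Lg t' \<subseteq> sem Lg t"
  proof cases
    case (1 A rhs u v)
    then have "sem Lg rhs \<subseteq> sem Lg [Inl A]" using assms(2) by simp
    then show ?thesis using 1 by (simp add: sem_append conc_mono)
  qed
  with step.IH show ?case by blast
qed simp

lemma derivation_ctx: "(cfg_step P)\<^sup>*\<^sup>* s t \<Longrightarrow> (cfg_step P)\<^sup>*\<^sup>* (u @ s @ v) (u @ t @ v)"
proof (induction rule: rtranclp_induct)
  case (step t t')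
  from step.hyps(2) have "cfg_step P (u @ t @ v) (u @ t' @ v)"
    by cases (metis append.assoc cfg_step.intros)
  with step.IH show ?case by simp
qed simp

lemma derivation_single: "(A, rhs) \<in> P \<Longrightarrow> (cfg_step P)\<^sup>*\<^sup>* [Inl A] rhs"
  using cfg_step.intros[of A rhs P "[]" "[]"] by simp

section \<open>The grammar generating bdr of an automaton's language\<close>

definition nt_bdr :: "'s::countable \<Rightarrow> nat" where "nt_bdr q = 2 * to_nat q"
definition nt_dual :: "'s::countable \<Rightarrow> nat" where "nt_dual q = Suc (2 * to_nat q)"

fun transition_prods :: "('s::countable \<times> 'a option \<times> 's) \<Rightarrow> (nat \<times> (nat + 'a) list) set" where
  "transition_prods (p, None, p') = {(nt_bdr p, [Inl (nt_bdr p')]), (nt_dual p, [Inl (nt_dual p')])}"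
| "transition_prods (p, Some a, p') =
     {(nt_bdr p, [Inr a, Inl (nt_dual p')]), (nt_dual p, [Inl (nt_bdr p'), Inr a])}"

definition bdr_prods :: "('s::countable \<times> 'a option \<times> 's) set \<Rightarrow> 's \<Rightarrow> (nat \<times> (nat + 'a) list) set"
  where "bdr_prods T f = {(nt_bdr f, []), (nt_dual f, [])} \<union> (\<Union>e\<in>T. transition_prods e)"

lemma finite_bdr_prods:
  fixes T :: "('s::countable \<times> 'a option \<times> 's) set"
  assumes "finite T"
  shows "finite (bdr_prods T f)"
proof -
  have "finite (transition_prods e)" for e :: "'s \<times> 'a option \<times> 's"
    by (cases e rule: transition_prods.cases) auto
  with assms show ?thesis unfolding bdr_prods_def by auto
qed

lemma bdr_prods_complete:
  assumes "path T q w f"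
  shows "(cfg_step (bdr_prods T f))\<^sup>*\<^sup>* [Inl (nt_bdr q)] (map Inr (bdr w)) \<and>
         (cfg_step (bdr_prods T f))\<^sup>*\<^sup>* [Inl (nt_dual q)] (map Inr (bdr_dual w))"
  using assms
proof induction
  case (path_Nil p)
  have "(nt_bdr p, []) \<in> bdr_prods T p" "(nt_dual p, []) \<in> bdr_prods T p"
    by (auto simp: bdr_prods_def)
  then show ?case by (auto dest!: derivation_single)
next
  case (path_letter p a p' w g)
  let ?D = "(cfg_step (bdr_prods T g))\<^sup>*\<^sup>*"
  have "(nt_bdr p, [Inr a, Inl (nt_dual p')]) \<in> bdr_prods T g"
    and "(nt_dual p, [Inl (nt_bdr p'), Inr a]) \<in> bdr_prods T g"
    using path_letter.hyps(1) unfolding bdr_prods_def by force+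
  moreover have "?D ([Inr a] @ [Inl (nt_dual p')] @ []) ([Inr a] @ map Inr (bdr_dual w) @ [])"
    and "?D ([] @ [Inl (nt_bdr p')] @ [Inr a]) ([] @ map Inr (bdr w) @ [Inr a])"
    using path_letter.IH by (intro derivation_ctx; simp)+
  ultimately show ?case
    by (auto simp: bdr_Cons bdr_dual_Cons dest!: derivation_single intro: rtranclp_trans)
next
  case (path_eps p p' w g)
  have "(nt_bdr p, [Inl (nt_bdr p')]) \<in> bdr_prods T g"
    and "(nt_dual p, [Inl (nt_dual p')]) \<in> bdr_prods T g"
    using path_eps.hyps(1) unfolding bdr_prods_def by force+
  then show ?case using path_eps.IH
    by (auto dest!: derivation_single intro: rtranclp_trans)
qed

text \<open>Soundness: interpret each nonterminal by the language it is meant to generate;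
  every production respects this interpretation.\<close>

definition nt_lang :: "('s::countable \<times> 'a option \<times> 's) set \<Rightarrow> 's \<Rightarrow> nat \<Rightarrow> 'a list set"
  where "nt_lang T f n = (if even n then bdr ` {w. path T (from_nat (n div 2)) w f}
                          else bdr_dual ` {w. path T (from_nat (n div 2)) w f})"

lemma nt_lang_bdr [simp]: "nt_lang T f (nt_bdr q) = bdr ` {w. path T q w f}"
  and nt_lang_dual [simp]: "nt_lang T f (nt_dual q) = bdr_dual ` {w. path T q w f}"
  by (simp_all add: nt_lang_def nt_bdr_def nt_dual_def)

lemma bdr_prods_sound:
  assumes "(A, rhs) \<in> bdr_prods T f"
  shows "sem (nt_lang T f) rhs \<subseteq> nt_lang T f A"
proof -
  have "[] \<in> bdr ` {w. path T f w f}" "[] \<in> bdr_dual ` {w. path T f w f}"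
    using path_Nil[of T f] by force+
  moreover have "sem (nt_lang T f) rhs \<subseteq> nt_lang T f A"
    if "e \<in> T" "(A, rhs) \<in> transition_prods e" for e
  proof (cases e rule: transition_prods.cases)
    case (1 p p')
    then show ?thesis using that by (auto intro!: imageI path_eps)
  next
    case (2 p a p')
    then show ?thesis using that
      by (auto simp: bdr_Cons[symmetric] bdr_dual_Cons[symmetric] intro!: imageI path_letter)
  qed
  ultimately show ?thesis using assms unfolding bdr_prods_def by auto
qed

theorem bdr_prods_lang:
  "cfg_lang (bdr_prods T f) (nt_bdr i) = bdr ` {w. path T i w f}"
proof
  show "cfg_lang (bdr_prods T f) (nt_bdr i) \<subseteq> bdr ` {w. path T i w f}"
    using derivation_sound[where Lg = "nt_lang T f", OF _ bdr_prods_sound]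
    by (fastforce simp: cfg_lang_def)
  show "bdr ` {w. path T i w f} \<subseteq> cfg_lang (bdr_prods T f) (nt_bdr i)"
    using bdr_prods_complete by (auto simp: cfg_lang_def)
qed

theorem mainTheorem12:
  fixes L :: "'a list set"
  assumes "regular L"
  shows "context_free (bdr_lang L)"
proof -
  obtain T :: "(nat list \<times> 'a option \<times> nat list) set" and i f
    where "finite T" and L: "L = {w. path T i w f}"
    using regular_enfa[OF assms] .
  then have "finite (bdr_prods T f)" and "cfg_lang (bdr_prods T f) (nt_bdr i) = bdr_lang L"
    by (simp_all add: finite_bdr_prods bdr_prods_lang bdr_lang_def)
  then show ?thesis unfolding context_free_def by blast
qed

end
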